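(* Let $E^2$ denote the Stokes operator in cardioid coordinates $(\mu,\nu,\varphi)$, acting on functions $\psi(\mu,\nu)$ with $\mu,\nu>0$, by $$E^2\psi=(\mu^2+\nu^2)^3\left[\frac{\partial^2\psi}{\partial \mu^2}+\frac{3\mu^2-\nu^2}{\mu(\mu^2+\nu^2)}\frac{\partial\psi}{\partial \mu}+\frac{3\nu^2-\mu^2}{\nu(\mu^2+\nu^2)}\frac{\partial\psi}{\partial \nu}+\frac{\partial^2\psi}{\partial \nu^2}\right].$$ Then the equation $E^2\psi=0$ $R$-separates variables with $R(\mu,\nu)=\sqrt{2}(\mu^2+\nu^2)$: for twice differentiable, nowhere vanishing $M$ and $N$, the function $\psi(\mu,\nu)=\frac{1}{\sqrt2(\mu^2+\nu^2)}M(\mu)N(\nu)$ satisfies $E^2\psi=0$ if and only if there is a constant $\lambda$ with $$\frac{M''}{M}-\frac{1}{\mu}\frac{M'}{M}=\lambda=-\frac{N''}{N}+\frac{1}{\nu}\frac{N'}{N}.$$ Moreover, for $\lambda=n^2>0$ the solutions are exactly $$M(\mu)=c_1\mu I_1(n\mu)+c_2\mu K_1(n\mu),\qquad N(\nu)=c_3\nu J_1(n\nu)+c_4\nu Y_1(n\nu),$$ with arbitrary constants $c_1,\dots,c_4$; in particular every function $\psi(\mu,\nu)=\frac{1}{\mu^2+\nu^2}\big[c_1\mu I_1(n\mu)+c_2\mu K_1(n\mu)\big]\big[c_3\nu J_1(n\nu)+c_4\nu Y_1(n\nu)\big]$ with $n>0$ satisfies $E^2\psi=0$.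
   Context: Cardioid coordinates $(\mu,\nu,\varphi)$, $\mu,\nu\ge0$, $\varphi\in[0,2\pi)$, are given by $x=\frac{\mu\nu\cos\varphi}{(\mu^2+\nu^2)^2}$, $y=\frac{\mu\nu\sin\varphi}{(\mu^2+\nu^2)^2}$, $z=\frac{\mu^2-\nu^2}{2(\mu^2+\nu^2)^2}$. For a rotational coordinate system $x=\rho(q_1,q_2)\cos\varphi$, $y=\rho(q_1,q_2)\sin\varphi$, $z=z(q_1,q_2)$, with $h_i=\big((\partial_{q_i}\rho)^2+(\partial_{q_i}z)^2\big)^{-1/2}$ and $\varpi=|\rho|$, the Stokes operator is $E^2=h_1h_2\varpi\big[\partial_{q_1}\big(\tfrac{h_1}{h_2\varpi}\partial_{q_1}\big)+\partial_{q_2}\big(\tfrac{h_2}{h_1\varpi}\partial_{q_2}\big)\big]$; in cardioid coordinates this is the displayed formula. $J_1,Y_1$ are the Bessel functions of order one of the first and second kind, and $I_1,K_1$ the modified Bessel functions of order one of the first and second kind. *)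

theory Defs
  imports "HOL-Analysis.Analysis"
begin

text \<open>Bessel functions of order one (real argument, intended for x > 0), via their
standard power series (DLMF 10.2.2, 10.8.1, 10.25.2, 10.31.1 with n = 1).\<close>

definition besselJ1 :: "real \<Rightarrow> real" where
  "besselJ1 x = (\<Sum>k. (-1)^k / (fact k * fact (k+1)) * (x/2)^(2*k+1))"

definition besselI1 :: "real \<Rightarrow> real" where
  "besselI1 x = (\<Sum>k. 1 / (fact k * fact (k+1)) * (x/2)^(2*k+1))"

definition besselY1 :: "real \<Rightarrow> real" where
  "besselY1 x = - 2 / (pi * x) + (2/pi) * ln (x/2) * besselJ1 x
     - (x / (2*pi)) * (\<Sum>k. (Digamma (real k + 1) + Digamma (real k + 2))
                              * (-(x^2)/4)^k / (fact k * fact (k+1)))"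

definition besselK1 :: "real \<Rightarrow> real" where
  "besselK1 x = 1 / x + ln (x/2) * besselI1 x
     - (x / 4) * (\<Sum>k. (Digamma (real k + 1) + Digamma (real k + 2))
                         * (x^2/4)^k / (fact k * fact (k+1)))"

definition stokesE2_cardioid :: "(real \<Rightarrow> real \<Rightarrow> real) \<Rightarrow> real \<Rightarrow> real \<Rightarrow> real" where
  "stokesE2_cardioid \<psi> \<mu> \<nu> =
     (\<mu>^2 + \<nu>^2)^3 *
       ( deriv (\<lambda>m. deriv (\<lambda>m'. \<psi> m' \<nu>) m) \<mu>
       + (3*\<mu>^2 - \<nu>^2) / (\<mu> * (\<mu>^2 + \<nu>^2)) * deriv (\<lambda>m. \<psi> m \<nu>) \<mu>
       + (3*\<nu>^2 - \<mu>^2) / (\<nu> * (\<mu>^2 + \<nu>^2)) * deriv (\<lambda>v. \<psi> \<mu> v) \<nu>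
       + deriv (\<lambda>v. deriv (\<lambda>v'. \<psi> \<mu> v') v) \<nu>)"

definition twice_diff_pos :: "(real \<Rightarrow> real) \<Rightarrow> bool" where
  "twice_diff_pos f \<longleftrightarrow> (\<forall>x>0. f differentiable at x \<and> deriv f differentiable at x)"

end

(*
  With R = mu^2 + nu^2, the Stokes operator applied to M(mu) N(nu) / (k R) equals
  R^2 / k * (N (M'' - M'/mu) + M (N'' - N'/nu)), so E^2 psi = 0 separates into
  M'' - M'/mu = lambda M and N'' - N'/nu = -lambda N. Substituting s = c x^2 turns
  y'' - y'/x = 4 c y into the Bessel-Clifford equation s f'' = f, which has the entire
  solution s C_1(s) and a logarithmic second solution with Wronskian identically -1.
  For c = n^2/4 these give constant multiples of x I_1(n x), x K_1(n x); for c = -n^2/4,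
  of x J_1(n x), x Y_1(n x). The Wronskian of such a pair is -2 c x times a nonzero
  constant, so it never vanishes on (0, oo), and Abel's identity W' = W/x then makes every
  solution of the separated equation a linear combination of the pair.
*)
theory Submission
  imports Defs
begin

lemma deriv_cong_open:
  fixes f g :: "real \<Rightarrow> real"
  assumes "open S" "x \<in> S" "\<And>y. y \<in> S \<Longrightarrow> f y = g y"
  shows "deriv f x = deriv g x"
  using assms by (intro deriv_cong_ev) (auto simp: eventually_nhds)

lemma differentiable_cong_open:
  fixes f g :: "real \<Rightarrow> real"
  assumes "open S" "x \<in> S" "\<And>y. y \<in> S \<Longrightarrow> f y = g y" "f differentiable at x"
  shows "g differentiable at x"
  using assms has_field_derivative_transform_within_open[of f _ x S g]
  unfolding real_differentiable_def by blast

lemma twice_diff_pos_DERIV: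
  assumes "twice_diff_pos y" "x > 0"
  shows "(y has_real_derivative deriv y x) (at x)"
    and "(deriv y has_real_derivative deriv (deriv y) x) (at x)"
  using assms unfolding twice_diff_pos_def by (auto simp: DERIV_deriv_iff_real_differentiable)

lemma has_real_derivative_ln_abs:
  assumes "x \<noteq> 0"
  shows "((\<lambda>s. ln \<bar>s\<bar>) has_real_derivative 1 / x) (at x)"
proof -
  have "ln (s^2) / 2 = ln \<bar>s\<bar>" for s :: real
    using ln_realpow[of "\<bar>s\<bar>" 2] by (cases "s = 0") auto
  moreover have "0 < x * x"
    using assms by (auto simp: zero_less_mult_iff linorder_neq_iff)
  then have "((\<lambda>s. ln (s^2) / 2) has_real_derivative 1 / x) (at x)"
    by (auto intro!: derivative_eq_intros simp: power2_eq_square)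
  ultimately show ?thesis by simp
qed

lemma has_real_derivative_ln_abs_chain [derivative_intros]:
  "f x \<noteq> 0 \<Longrightarrow> (f has_real_derivative f') (at x)
    \<Longrightarrow> ((\<lambda>x. ln \<bar>f x\<bar>) has_real_derivative 1 / f x * f') (at x)"
  using DERIV_chain2[OF has_real_derivative_ln_abs] .

lemma has_real_derivative_compose_square:
  "(f has_real_derivative f') (at (c * x^2))
    \<Longrightarrow> ((\<lambda>x. f (c * x^2)) has_real_derivative f' * (2 * c * x)) (at x)"
  by (erule DERIV_chain2) (auto intro!: derivative_eq_intros)

definition wronskian :: "(real \<Rightarrow> real) \<Rightarrow> (real \<Rightarrow> real) \<Rightarrow> real \<Rightarrow> real" where
  "wronskian u v x = u x * deriv v x - deriv u x * v x"

lemma wronskian_has_derivative: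
  fixes u v :: "real \<Rightarrow> real"
  assumes "u differentiable at x" "deriv u differentiable at x"
    and "v differentiable at x" "deriv v differentiable at x"
  shows "(wronskian u v has_real_derivative
           u x * deriv (deriv v) x - deriv (deriv u) x * v x) (at x)"
proof -
  from assms have "(u has_real_derivative deriv u x) (at x)"
    "(deriv u has_real_derivative deriv (deriv u) x) (at x)" "(v has_real_derivative deriv v x) (at x)" "(deriv v has_real_derivative deriv (deriv v) x) (at x)"
    by (simp_all add: DERIV_deriv_iff_real_differentiable)
  from DERIV_diff[OF DERIV_mult[OF this(1,4)] DERIV_mult[OF this(2,3)]] show ?thesis
    unfolding wronskian_def[abs_def] by (simp add: mult.commute)
qed

lemma wronskian_cong_pos:
  assumes "\<And>x. x > 0 \<Longrightarrow> u x = u' x" "\<And>x. x > 0 \<Longrightarrow> v x = v' x" "x > 0"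
  shows "wronskian u v x = wronskian u' v' x"
  using assms deriv_cong_open[of "{0<..}" x u u'] deriv_cong_open[of "{0<..}" x v v']
  unfolding wronskian_def by simp

section \<open>Entire power series\<close>

definition power_series :: "(nat \<Rightarrow> real) \<Rightarrow> real \<Rightarrow> real" where
  "power_series c s = (\<Sum>k. c k * s^k)"

definition entire_coeffs :: "(nat \<Rightarrow> real) \<Rightarrow> bool" where
  "entire_coeffs c \<longleftrightarrow> (\<forall>s. summable (\<lambda>k. c k * s^k))"

lemma entire_coeffs_diffs: "entire_coeffs c \<Longrightarrow> entire_coeffs (diffs c)"
  unfolding entire_coeffs_def by (blast intro: termdiff_converges_all)

lemma power_series_has_derivative:
  "entire_coeffs c \<Longrightarrow> (power_series c has_real_derivative power_series (diffs c) s) (at s)"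
  unfolding entire_coeffs_def power_series_def fun_eq_iff[symmetric]
  by (rule termdiffs_strong_converges_everywhere) blast

lemma power_series_has_derivative_chain [derivative_intros]:
  "entire_coeffs c \<Longrightarrow> (f has_real_derivative f') (at x)
    \<Longrightarrow> ((\<lambda>x. power_series c (f x)) has_real_derivative
          power_series (diffs c) (f x) * f') (at x)"
  using DERIV_chain2[OF power_series_has_derivative] .

lemma power_series_continuous: "entire_coeffs c \<Longrightarrow> isCont (power_series c) s"
  using power_series_has_derivative DERIV_isCont by blast

lemma entire_coeffs_lincomb:
  assumes "entire_coeffs a" "entire_coeffs b"
  shows "entire_coeffs (\<lambda>k. x * a k + y * b k)"
  unfolding entire_coeffs_def
proof
  fix s
  have "summable (\<lambda>k. x * (a k * s^k) + y * (b k * s^k))"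
    using assms unfolding entire_coeffs_def by (intro summable_add summable_mult) auto
  then show "summable (\<lambda>k. (x * a k + y * b k) * s ^ k)"
    by (simp add: algebra_simps)
qed

lemma power_series_lincomb:
  assumes "entire_coeffs a" "entire_coeffs b"
  shows "power_series (\<lambda>k. x * a k + y * b k) s = x * power_series a s + y * power_series b s"
proof -
  have "(\<lambda>k. x * (a k * s^k) + y * (b k * s^k)) sums (x * power_series a s + y * power_series b s)"
    using assms unfolding entire_coeffs_def power_series_def
    by (intro sums_add sums_mult summable_sums) auto
  then show ?thesis
    unfolding power_series_def by (simp add: sums_iff algebra_simps)
qed

lemma power_series_shift:
  assumes "entire_coeffs c"
  shows "power_series c s = c 0 + s * power_series (\<lambda>k. c (Suc k)) s"
proof (cases "s = 0")
  case True
  then show ?thesis by (simp add: power_series_def)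
next
  case False
  have "(\<lambda>k. c k * s^k) sums power_series c s"
    using assms unfolding entire_coeffs_def power_series_def by (simp add: summable_sums)
  then have "(\<lambda>k. c (Suc k) * s^Suc k) sums (power_series c s - c 0)"
    using sums_Suc_iff[of "\<lambda>k. c k * s^k"] by simp
  then have "(\<lambda>k. c (Suc k) * s^Suc k / s) sums ((power_series c s - c 0) / s)"
    by (rule sums_divide)
  then have "power_series (\<lambda>k. c (Suc k)) s = (power_series c s - c 0) / s"
    using False unfolding power_series_def by (simp add: sums_iff)
  then show ?thesis
    using False by (simp add: field_simps)
qed

lemma entire_coeffs_index_mult:
  assumes "entire_coeffs c"
  shows "entire_coeffs (\<lambda>k. real k * c k)"
  unfolding entire_coeffs_def
proof
  fix s :: real
  have "summable (\<lambda>k. s * (diffs c k * s^k))"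
    using entire_coeffs_diffs[OF assms] unfolding entire_coeffs_def by (intro summable_mult) auto
  then have "summable (\<lambda>k. real (Suc k) * c (Suc k) * s ^ Suc k)"
    by (simp add: diffs_def algebra_simps)
  then show "summable (\<lambda>k. real k * c k * s ^ k)"
    by (subst summable_Suc_iff[symmetric])
qed

lemma power_series_mult_diffs:
  assumes "entire_coeffs c"
  shows "s * power_series (diffs c) s = power_series (\<lambda>k. real k * c k) s"
  using power_series_shift[OF entire_coeffs_index_mult[OF assms], of s]
  by (simp add: diffs_def)

lemma power_series_bessel_operator:
  assumes "entire_coeffs c"
  shows "2 * power_series (diffs c) s + s * power_series (diffs (diffs c)) s
         = power_series (\<lambda>k. (real k + 2) * diffs c k) s"
proof -
  have d: "entire_coeffs (diffs c)" using entire_coeffs_diffs[OF assms] .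
  have "2 * power_series (diffs c) s + s * power_series (diffs (diffs c)) s
        = 2 * power_series (diffs c) s + 1 * power_series (\<lambda>k. real k * diffs c k) s"
    by (simp add: power_series_mult_diffs[OF d])
  also have "\<dots> = power_series (\<lambda>k. 2 * diffs c k + 1 * (real k * diffs c k)) s"
    by (rule power_series_lincomb[symmetric]) (intro d entire_coeffs_index_mult)+
  finally show ?thesis
    by (simp add: algebra_simps)
qed

definition bessel_coeff :: "nat \<Rightarrow> real" where
  "bessel_coeff k = 1 / (fact k * fact (k+1))"

definition bessel2_coeff :: "nat \<Rightarrow> real" where
  "bessel2_coeff k = (Digamma (real k + 1) + Digamma (real k + 2)) / (fact k * fact (k+1))"

lemma entire_bessel_coeff: "entire_coeffs bessel_coeff"
  unfolding entire_coeffs_def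
proof
  fix s :: real
  have "norm (bessel_coeff k * s^k) \<le> \<bar>s\<bar>^k / fact k" for k
  proof -
    have "norm (bessel_coeff k * s^k) = \<bar>s\<bar>^k / (fact k * fact (k+1))"
      by (simp add: bessel_coeff_def abs_mult power_abs)
    also have "\<dots> \<le> \<bar>s\<bar>^k / fact k"
      using fact_ge_1[of "k+1", where 'a=real] by (intro divide_left_mono) auto
    finally show ?thesis .
  qed
  then show "summable (\<lambda>k. bessel_coeff k * s^k)"
    by (intro summable_comparison_test[OF _ summable_exp[of "\<bar>s\<bar>"]]) (auto simp: field_simps)
qed

lemma abs_Digamma_nat_le: "\<bar>Digamma (real n + 1)\<bar> \<le> real n + 1"
proof -
  have "harm n \<le> (real n :: real)"
    using sum_bounded_above[of "{..<n}" "\<lambda>k. inverse (real (Suc k))" 1]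
    by (simp add: harm_altdef inverse_le_1_iff)
  moreover have "Digamma (real n + 1) = harm n - euler_mascheroni"
    using Digamma_of_nat[of n, where 'a=real] by (simp add: add.commute)
  moreover have "harm n \<ge> (0::real)" "(euler_mascheroni::real) < 1"
    using harm_nonneg euler_mascheroni_less_13_over_22 by auto
  ultimately show ?thesis
    using euler_mascheroni_pos by (simp add: abs_le_iff)
qed

lemma entire_bessel2_coeff: "entire_coeffs bessel2_coeff"
  unfolding entire_coeffs_def
proof
  fix s :: real
  have "norm (bessel2_coeff k * s^k) \<le> 3 * \<bar>s\<bar>^k / fact k" for k
  proof -
    have "\<bar>Digamma (real k + 2)\<bar> \<le> real k + 2"
      using abs_Digamma_nat_le[of "Suc k"] by (simp add: add.commute)
    then have num: "\<bar>Digamma (real k + 1) + Digamma (real k + 2)\<bar> \<le> 3 * (real k + 1)"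
      using abs_Digamma_nat_le[of k] abs_triangle_ineq[of "Digamma (real k + 1)" "Digamma (real k + 2)"]
      by simp
    have "norm (bessel2_coeff k * s^k)
          = \<bar>Digamma (real k + 1) + Digamma (real k + 2)\<bar> * \<bar>s\<bar>^k / (fact k * fact (k+1))"
      by (simp add: bessel2_coeff_def abs_mult power_abs)
    also have "\<dots> \<le> 3 * (real k + 1) * \<bar>s\<bar>^k / (fact k * fact (k+1))"
      by (intro divide_right_mono mult_right_mono num) auto
    also have "\<dots> = 3 * \<bar>s\<bar>^k / (fact k * fact k)"
    proof -
      have "fact (k+1) = (real k + 1) * (fact k :: real)" "real k + 1 \<noteq> 0"
        by simp_all
      then show ?thesis by (simp add: divide_simps)
    qed
    also have "\<dots> \<le> 3 * \<bar>s\<bar>^k / fact k"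
      using fact_ge_1[of k, where 'a=real] by (intro divide_left_mono) auto
    finally show ?thesis .
  qed
  then show "summable (\<lambda>k. bessel2_coeff k * s^k)"
    by (intro summable_comparison_test[OF _ summable_mult[OF summable_exp[of "\<bar>s\<bar>"], of 3]])
       (auto simp: field_simps)
qed

lemma bessel_coeff_0 [simp]: "bessel_coeff 0 = 1"
  by (simp add: bessel_coeff_def)

lemma bessel_coeff_Suc: "bessel_coeff (Suc k) = bessel_coeff k / ((real k + 1) * (real k + 2))"
  by (simp add: bessel_coeff_def field_simps)

lemma bessel_coeff_diffs: "(real k + 2) * diffs bessel_coeff k = bessel_coeff k"
proof -
  have e: "fact (Suc (Suc k)) = (real k + 2) * fact (Suc k)" "real (Suc k) * fact k = fact (Suc k)"
    by (simp_all add: algebra_simps)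
  have "(real k + 2) * diffs bessel_coeff k
        = real (Suc k) * (real k + 2) / (fact (Suc k) * fact (Suc (Suc k)))"
    by (simp add: diffs_def bessel_coeff_def)
  also have "\<dots> = bessel_coeff k"
    unfolding e(1) e(2)[symmetric] by (simp add: bessel_coeff_def)
  finally show ?thesis .
qed

lemma bessel2_coeff_diffs:
  "(real k + 2) * diffs bessel2_coeff k - bessel2_coeff k = (2 * real k + 3) * bessel_coeff (Suc k)"
proof -
  define f :: real where "f = fact k * fact (k+1)"
  define D1 D2 D3 where "D1 = Digamma (real k + 1)" and "D2 = Digamma (real k + 2)"
    and "D3 = Digamma (real k + 3)"
  have nz: "real k + 1 \<noteq> 0" "real k + 2 \<noteq> 0" "f \<noteq> 0"
    unfolding f_def by linarith+ simp
  have d2: "D2 = D1 + 1 / (real k + 1)"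
    using Digamma_plus1[of "real k + 1"] by (simp add: D1_def D2_def add.assoc)
  have d3: "D3 = D2 + 1 / (real k + 2)"
    using Digamma_plus1[of "real k + 2"] by (simp add: D2_def D3_def add.assoc)
  have "bessel2_coeff (Suc k) = (D2 + D3) / ((real k + 1) * (real k + 2) * f)"
  proof -
    have "Digamma (real (Suc k) + 1) = D2" "Digamma (real (Suc k) + 2) = D3"
      by (simp_all add: D2_def D3_def add.commute add.left_commute)
    then show ?thesis
      unfolding bessel2_coeff_def f_def by (simp add: algebra_simps)
  qed
  then have "(real k + 2) * diffs bessel2_coeff k = (D2 + D3) / f"
    unfolding diffs_def of_nat_Suc using nz by (simp add: add.commute)
  moreover have "bessel2_coeff k = (D1 + D2) / f"
    unfolding bessel2_coeff_def D1_def D2_def f_def ..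
  ultimately have "(real k + 2) * diffs bessel2_coeff k - bessel2_coeff k = (D3 - D1) / f"
    by (simp add: diff_divide_distrib[symmetric])
  also have "\<dots> = (1 / (real k + 1) + 1 / (real k + 2)) / f"
    using d2 d3 by simp
  also have "\<dots> = (2 * real k + 3) * bessel_coeff (Suc k)"
  proof -
    have "bessel_coeff (Suc k) = 1 / ((real k + 1) * (real k + 2) * f)"
      unfolding bessel_coeff_Suc by (simp add: bessel_coeff_def f_def)
    then show ?thesis
      using nz by (simp add: field_simps)
  qed
  finally show ?thesis .
qed

lemma bessel_series_ode:
  "2 * power_series (diffs bessel_coeff) s + s * power_series (diffs (diffs bessel_coeff)) s
   = power_series bessel_coeff s"
  by (simp add: power_series_bessel_operator[OF entire_bessel_coeff] bessel_coeff_diffs)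

lemma bessel2_series_ode:
  "power_series bessel_coeff s + 2 * (s * power_series (diffs bessel_coeff) s)
   = 1 + s * (2 * power_series (diffs bessel2_coeff) s + s * power_series (diffs (diffs bessel2_coeff)) s
              - power_series bessel2_coeff s)"
proof -
  let ?g = bessel_coeff and ?h = bessel2_coeff
  have g: "entire_coeffs ?g" "entire_coeffs (\<lambda>k. real k * ?g k)"
    by (intro entire_bessel_coeff entire_coeffs_index_mult)+
  have h: "entire_coeffs (diffs ?h)" "entire_coeffs (\<lambda>k. real k * diffs ?h k)" "entire_coeffs ?h"
    by (intro entire_bessel2_coeff entire_coeffs_diffs entire_coeffs_index_mult)+
  have "power_series ?g s + 2 * (s * power_series (diffs ?g) s)
        = power_series (\<lambda>k. 1 * ?g k + 2 * (real k * ?g k)) s"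
    by (subst power_series_lincomb[OF g]) (simp add: power_series_mult_diffs[OF g(1)])
  also have "\<dots> = 1 + s * power_series (\<lambda>k. (2 * real k + 3) * ?g (Suc k)) s"
    by (subst power_series_shift[OF entire_coeffs_lincomb[OF g]])
       (simp add: algebra_simps)
  also have "power_series (\<lambda>k. (2 * real k + 3) * ?g (Suc k)) s
             = power_series (\<lambda>k. 1 * (2 * diffs ?h k + 1 * (real k * diffs ?h k)) + (-1) * ?h k) s"
  proof -
    have "1 * (2 * diffs ?h k + 1 * (real k * diffs ?h k)) + (-1) * ?h k
          = (2 * real k + 3) * ?g (Suc k)" for k
      using bessel2_coeff_diffs[of k] by (simp add: algebra_simps)
    then show ?thesis by presburger
  qed
  also have "\<dots> = 2 * power_series (diffs ?h) s + s * power_series (diffs (diffs ?h)) s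
                  - power_series ?h s"
    by (subst power_series_lincomb[OF entire_coeffs_lincomb[OF h(1,2)] h(3)],
        subst power_series_lincomb[OF h(1,2)]) (simp add: power_series_mult_diffs[OF h(1)])
  finally show ?thesis .
qed

section \<open>The Bessel--Clifford equation\<close>

text \<open>The substitution \<open>s = c x\<^sup>2\<close> turns \<open>y'' = y'/x + 4 c y\<close> into \<open>s f'' = f\<close>, the
  Bessel--Clifford equation of order \<open>-1\<close>. Its solution \<open>clifford1\<close> is \<open>s C\<^sub>1(s)\<close> with
  \<open>C\<^sub>1 = power_series bessel_coeff\<close> the Bessel--Clifford function; \<open>clifford2\<close> is the
  logarithmic second solution from which \<open>K\<^sub>1\<close> and \<open>Y\<^sub>1\<close> are built.\<close>

definition clifford_solution :: "(real \<Rightarrow> real) \<Rightarrow> bool" where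
  "clifford_solution f \<longleftrightarrow>
     (\<forall>s. s \<noteq> 0 \<longrightarrow>
        f differentiable at s \<and> deriv f differentiable at s \<and> s * deriv (deriv f) s = f s)"

definition clifford1 :: "real \<Rightarrow> real" where
  "clifford1 s = s * power_series bessel_coeff s"

definition clifford2 :: "real \<Rightarrow> real" where
  "clifford2 s = 1 + ln \<bar>s\<bar> * clifford1 s - s * power_series bessel2_coeff s"

lemma has_real_derivative_clifford1:
  "(clifford1 has_real_derivative
     power_series bessel_coeff s + s * power_series (diffs bessel_coeff) s) (at s)"
  unfolding clifford1_def[abs_def]
  by (auto intro!: derivative_eq_intros entire_bessel_coeff)

lemma has_real_derivative_clifford2:
  assumes "s \<noteq> 0"
  shows "(clifford2 has_real_derivative
           power_series bessel_coeff s
           + ln \<bar>s\<bar> * (power_series bessel_coeff s + s * power_series (diffs bessel_coeff) s)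
           - (power_series bessel2_coeff s + s * power_series (diffs bessel2_coeff) s)) (at s)"
  unfolding clifford2_def[abs_def] clifford1_def using assms
  by (auto intro!: derivative_eq_intros entire_bessel_coeff entire_bessel2_coeff
      simp: algebra_simps)

lemma clifford_solution_clifford1: "clifford_solution clifford1"
proof -
  let ?G = "power_series bessel_coeff" and ?G' = "power_series (diffs bessel_coeff)"
    and ?G'' = "power_series (diffs (diffs bessel_coeff))"
  note d1 = has_real_derivative_clifford1
  have d2: "((\<lambda>s. ?G s + s * ?G' s) has_real_derivative 2 * ?G' s + s * ?G'' s) (at s)" for s
    by (auto intro!: derivative_eq_intros entire_bessel_coeff entire_coeffs_diffs)
  have "deriv clifford1 = (\<lambda>s. ?G s + s * ?G' s)"
    using d1 DERIV_imp_deriv by blast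
  then show ?thesis
    unfolding clifford_solution_def
    using d1 d2 DERIV_imp_deriv[OF d2] bessel_series_ode
    by (auto simp: real_differentiable_def clifford1_def)
qed

lemma clifford_solution_clifford2: "clifford_solution clifford2"
proof -
  let ?G = "power_series bessel_coeff" and ?G' = "power_series (diffs bessel_coeff)"
    and ?G'' = "power_series (diffs (diffs bessel_coeff))"
    and ?H = "power_series bessel2_coeff" and ?H' = "power_series (diffs bessel2_coeff)"
    and ?H'' = "power_series (diffs (diffs bessel2_coeff))"
  define d1 where "d1 s = ?G s + ln \<bar>s\<bar> * (?G s + s * ?G' s) - (?H s + s * ?H' s)" for s
  define d2 where "d2 s = ?G' s + (?G s + s * ?G' s) / s + ln \<bar>s\<bar> * (2 * ?G' s + s * ?G'' s)
                          - (2 * ?H' s + s * ?H'' s)" for s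
  have D1: "(clifford2 has_real_derivative d1 s) (at s)" if "s \<noteq> 0" for s
    unfolding d1_def using has_real_derivative_clifford2[OF that] .
  have D2: "(d1 has_real_derivative d2 s) (at s)" if "s \<noteq> 0" for s
    unfolding d1_def[abs_def] d2_def using that
    by (auto intro!: derivative_eq_intros entire_bessel_coeff entire_bessel2_coeff entire_coeffs_diffs
        simp: algebra_simps add_divide_distrib)
  have ode: "s * d2 s = clifford2 s" if "s \<noteq> 0" for s
  proof -
    have "s * d2 s = ?G s + 2 * (s * ?G' s) + ln \<bar>s\<bar> * (s * (2 * ?G' s + s * ?G'' s))
                     - s * (2 * ?H' s + s * ?H'' s)"
      unfolding d2_def using that by (simp add: field_simps)
    then show ?thesis
      unfolding bessel_series_ode bessel2_series_ode clifford2_def clifford1_def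
      by (simp add: algebra_simps)
  qed
  have "deriv (deriv clifford2) s = d2 s" "deriv clifford2 differentiable at s" if "s \<noteq> 0" for s
  proof -
    have "deriv clifford2 y = d1 y" if "y \<in> - {0}" for y
      using D1 DERIV_imp_deriv that by auto
    then show "deriv (deriv clifford2) s = d2 s" "deriv clifford2 differentiable at s"
      using \<open>s \<noteq> 0\<close> D2[OF \<open>s \<noteq> 0\<close>] DERIV_imp_deriv[OF D2[OF \<open>s \<noteq> 0\<close>]]
        deriv_cong_open[of "- {0}" s "deriv clifford2" d1]
        differentiable_cong_open[of "- {0}" s d1 "deriv clifford2"]
      by (auto simp: real_differentiable_def)
  qed
  with D1 ode show ?thesis
    unfolding clifford_solution_def by (auto simp: real_differentiable_def)
qed

lemma wronskian_clifford_has_derivative: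
  assumes "clifford_solution f" "clifford_solution g" "s \<noteq> 0"
  shows "(wronskian f g has_real_derivative 0) (at s)"
proof -
  have "s * (f s * deriv (deriv g) s - deriv (deriv f) s * g s)
        = f s * (s * deriv (deriv g) s) - (s * deriv (deriv f) s) * g s"
    by (simp add: algebra_simps)
  also have "\<dots> = 0"
    using assms unfolding clifford_solution_def by simp
  finally have "s * (f s * deriv (deriv g) s - deriv (deriv f) s * g s) = 0" .
  then have "f s * deriv (deriv g) s - deriv (deriv f) s * g s = 0"
    using assms(3) by simp
  with wronskian_has_derivative[of f s g] show ?thesis
    using assms unfolding clifford_solution_def by simp
qed

lemma wronskian_clifford1_clifford2:
  assumes "s \<noteq> 0"
  shows "wronskian clifford1 clifford2 s = -1"
proof -
  let ?G = "power_series bessel_coeff" and ?G' = "power_series (diffs bessel_coeff)"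
    and ?H = "power_series bessel2_coeff" and ?H' = "power_series (diffs bessel2_coeff)"
  \<comment> \<open>Free of logarithms, this form is continuous at \<open>0\<close>, where it equals \<open>-1\<close>.\<close>
  define W where "W s = s * ?G s ^ 2 - ?G s - s * ?G' s + s^2 * (?G' s * ?H s - ?G s * ?H' s)" for s
  have W_eq: "wronskian clifford1 clifford2 s = W s" if "s \<noteq> 0" for s
    unfolding wronskian_def DERIV_imp_deriv[OF has_real_derivative_clifford1]
      DERIV_imp_deriv[OF has_real_derivative_clifford2[OF that]]
    by (simp add: W_def clifford2_def clifford1_def algebra_simps power2_eq_square)
  have W_cont: "isCont W s" for s
    unfolding W_def[abs_def]
    by (intro continuous_intros power_series_continuous entire_bessel_coeff entire_bessel2_coeff
        entire_coeffs_diffs)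
  have W_deriv: "(W has_real_derivative 0) (at s)" if "s \<noteq> 0" for s
    using that W_eq
    by (intro has_field_derivative_transform_within_open[where S="- {0}",
          OF wronskian_clifford_has_derivative[OF clifford_solution_clifford1 clifford_solution_clifford2]])
       auto
  have "W s = W 0"
  proof (cases "s > 0")
    case True
    then show ?thesis
      using W_cont W_deriv
      by (intro DERIV_isconst_end continuous_at_imp_continuous_on) auto
  next
    case False
    with assms have "s < 0" by simp
    then show ?thesis
      using W_cont W_deriv
      by (intro DERIV_isconst_end[symmetric] continuous_at_imp_continuous_on) auto
  qed
  moreover have "W 0 = -1"
    using powser_zero[of bessel_coeff] by (simp add: W_def power_series_def)
  ultimately show ?thesis
    using W_eq[OF assms] by simp
qed

section \<open>The separated equations\<close>

definition solves_separated_ode :: "real \<Rightarrow> (real \<Rightarrow> real) \<Rightarrow> bool" where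
  "solves_separated_ode q y \<longleftrightarrow>
     twice_diff_pos y \<and> (\<forall>x>0. deriv (deriv y) x = deriv y x / x + q * y x)"

definition fundamental_pair :: "real \<Rightarrow> (real \<Rightarrow> real) \<Rightarrow> (real \<Rightarrow> real) \<Rightarrow> bool" where
  "fundamental_pair q u v \<longleftrightarrow>
     solves_separated_ode q u \<and> solves_separated_ode q v \<and> (\<forall>x>0. wronskian u v x \<noteq> 0)"

lemma solves_separated_odeI:
  assumes y1: "\<And>x. x > 0 \<Longrightarrow> (y has_real_derivative y1 x) (at x)"
    and y2: "\<And>x. x > 0 \<Longrightarrow> (y1 has_real_derivative y2 x) (at x)"
    and ode: "\<And>x. x > 0 \<Longrightarrow> y2 x = y1 x / x + q * y x"
  shows "solves_separated_ode q y"
proof -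
  have d1: "deriv y x = y1 x" if "x > 0" for x
    using DERIV_imp_deriv[OF y1[OF that]] .
  have d2: "(deriv y has_real_derivative y2 x) (at x)" if "x > 0" for x
    using that d1 by (intro has_field_derivative_transform_within_open[OF y2, where S="{0<..}"]) auto
  show ?thesis
    unfolding solves_separated_ode_def twice_diff_pos_def
  proof (intro conjI allI impI)
    fix x :: real assume "x > 0"
    show "y differentiable at x" "deriv y differentiable at x"
      using y1[OF \<open>x > 0\<close>] d2[OF \<open>x > 0\<close>] by (auto simp: real_differentiable_def)
    show "deriv (deriv y) x = deriv y x / x + q * y x"
      using DERIV_imp_deriv[OF d2] d1 ode \<open>x > 0\<close> by simp
  qed
qed

lemma solves_separated_odeD:
  assumes "solves_separated_ode q y" "x > 0"
  shows "(y has_real_derivative deriv y x) (at x)"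
    and "(deriv y has_real_derivative deriv y x / x + q * y x) (at x)"
  using assms twice_diff_pos_DERIV[of y x] unfolding solves_separated_ode_def by auto

lemma solves_separated_ode_cong:
  assumes "solves_separated_ode q y" "\<And>x. x > 0 \<Longrightarrow> y x = z x"
  shows "solves_separated_ode q z"
proof (rule solves_separated_odeI)
  fix x :: real assume "x > 0"
  then show "(z has_real_derivative deriv y x) (at x)"
    using assms
    by (intro has_field_derivative_transform_within_open[OF solves_separated_odeD(1), where S="{0<..}"])
       auto
  show "(deriv y has_real_derivative deriv y x / x + q * y x) (at x)"
    using assms(1) \<open>x > 0\<close> by (rule solves_separated_odeD(2))
  show "deriv y x / x + q * y x = deriv y x / x + q * z x"
    using assms(2) \<open>x > 0\<close> by simp
qed

lemma solves_separated_ode_lincomb: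
  assumes "solves_separated_ode q u" "solves_separated_ode q v"
  shows "solves_separated_ode q (\<lambda>x. a * u x + b * v x)"
proof (rule solves_separated_odeI)
  fix x :: real assume "x > 0"
  note u = solves_separated_odeD[OF assms(1) this] and v = solves_separated_odeD[OF assms(2) this]
  show "((\<lambda>x. a * u x + b * v x) has_real_derivative a * deriv u x + b * deriv v x) (at x)"
    by (intro DERIV_add DERIV_cmult u(1) v(1))
  show "((\<lambda>x. a * deriv u x + b * deriv v x) has_real_derivative
          a * (deriv u x / x + q * u x) + b * (deriv v x / x + q * v x)) (at x)"
    by (intro DERIV_add DERIV_cmult u(2) v(2))
  show "a * (deriv u x / x + q * u x) + b * (deriv v x / x + q * v x)
        = (a * deriv u x + b * deriv v x) / x + q * (a * u x + b * v x)"
    by (simp add: algebra_simps add_divide_distrib)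
qed

lemma solves_separated_ode_iff_quotient:
  assumes "twice_diff_pos y" "\<forall>x>0. y x \<noteq> 0"
  shows "(\<forall>x>0. deriv (deriv y) x / y x - (1/x) * (deriv y x / y x) = q)
         \<longleftrightarrow> solves_separated_ode q y"
  using assms unfolding solves_separated_ode_def by (auto simp: field_simps)

lemma wronskian_separated_has_derivative:
  assumes "solves_separated_ode q u" "solves_separated_ode q v" "x > 0"
  shows "(wronskian u v has_real_derivative wronskian u v x / x) (at x)"
proof -
  have "u x * deriv (deriv v) x - deriv (deriv u) x * v x = wronskian u v x / x"
    using assms unfolding solves_separated_ode_def wronskian_def
    by (simp add: algebra_simps diff_divide_distrib)
  with wronskian_has_derivative[of u x v] show ?thesis
    using assms unfolding solves_separated_ode_def twice_diff_pos_def by simp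
qed

text \<open>By Abel's identity \<open>W' = W/x\<close> the ratios \<open>W(y,v)/W(u,v)\<close> and \<open>W(u,y)/W(u,v)\<close> are
  constant, and Cramer's rule \<open>y W(u,v) = W(y,v) u + W(u,y) v\<close> expresses \<open>y\<close> in the basis
  \<open>u, v\<close>.\<close>

lemma fundamental_pair_span:
  assumes pair: "fundamental_pair q u v" and y: "solves_separated_ode q y"
  shows "\<exists>c1 c2. \<forall>x>0. y x = c1 * u x + c2 * v x"
proof -
  from pair have u: "solves_separated_ode q u" and v: "solves_separated_ode q v"
    and W: "\<And>x. x > 0 \<Longrightarrow> wronskian u v x \<noteq> 0"
    unfolding fundamental_pair_def by auto
  have const: "\<exists>c. \<forall>x\<in>{0<..}. wronskian a b x / wronskian u v x = c"
    if "solves_separated_ode q a" "solves_separated_ode q b" for a b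
  proof (rule has_field_derivative_zero_constant)
    fix x :: real assume "x \<in> {0<..}"
    then have "((\<lambda>x. wronskian a b x / wronskian u v x) has_real_derivative
                 (wronskian a b x / x * wronskian u v x - wronskian a b x * (wronskian u v x / x))
                 / (wronskian u v x * wronskian u v x)) (at x)"
      using that u v W by (intro DERIV_divide wronskian_separated_has_derivative) auto
    then show "((\<lambda>x. wronskian a b x / wronskian u v x) has_real_derivative 0) (at x within {0<..})"
      by (simp add: has_field_derivative_at_within)
  qed simp
  obtain c1 where c1: "\<And>x. x > 0 \<Longrightarrow> wronskian y v x / wronskian u v x = c1"
    using const[OF y v] by auto
  obtain c2 where c2: "\<And>x. x > 0 \<Longrightarrow> wronskian u y x / wronskian u v x = c2"
    using const[OF u y] by auto
  have "y x = c1 * u x + c2 * v x" if "x > 0" for x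
  proof -
    have "wronskian y v x = c1 * wronskian u v x" "wronskian u y x = c2 * wronskian u v x"
      using W[OF that] c1[OF that] c2[OF that] by (simp_all add: field_simps)
    moreover have "y x * wronskian u v x = wronskian y v x * u x + wronskian u y x * v x"
      unfolding wronskian_def by (simp add: algebra_simps)
    ultimately have "y x * wronskian u v x = (c1 * u x + c2 * v x) * wronskian u v x"
      by (simp add: algebra_simps)
    with W[OF that] show ?thesis by simp
  qed
  then show ?thesis by blast
qed

lemma solves_separated_ode_iff_span:
  assumes "fundamental_pair q u v"
  shows "solves_separated_ode q y \<longleftrightarrow> (\<exists>c1 c2. \<forall>x>0. y x = c1 * u x + c2 * v x)"
proof
  assume "\<exists>c1 c2. \<forall>x>0. y x = c1 * u x + c2 * v x"
  then obtain c1 c2 where "\<And>x. x > 0 \<Longrightarrow> c1 * u x + c2 * v x = y x"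
    by auto
  with assms show "solves_separated_ode q y"
    unfolding fundamental_pair_def by (blast intro: solves_separated_ode_cong solves_separated_ode_lincomb)
qed (use assms fundamental_pair_span in blast)

lemma fundamental_pair_cong:
  assumes "fundamental_pair q u v" "\<And>x. x > 0 \<Longrightarrow> u x = u' x" "\<And>x. x > 0 \<Longrightarrow> v x = v' x"
  shows "fundamental_pair q u' v'"
  using assms solves_separated_ode_cong[of q u u'] solves_separated_ode_cong[of q v v']
    wronskian_cong_pos[of u u' v v']
  unfolding fundamental_pair_def by auto

lemma fundamental_pair_scale:
  assumes "fundamental_pair q u v" "a \<noteq> 0" "b \<noteq> 0"
  shows "fundamental_pair q (\<lambda>x. a * u x) (\<lambda>x. b * v x)"
proof -
  from assms(1) have u: "solves_separated_ode q u" and v: "solves_separated_ode q v"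
    and W: "\<And>x. x > 0 \<Longrightarrow> wronskian u v x \<noteq> 0"
    unfolding fundamental_pair_def by auto
  have "wronskian (\<lambda>x. a * u x) (\<lambda>x. b * v x) x = a * b * wronskian u v x" if "x > 0" for x
    using DERIV_imp_deriv[OF DERIV_cmult[OF solves_separated_odeD(1)[OF u that], of a]]
      DERIV_imp_deriv[OF DERIV_cmult[OF solves_separated_odeD(1)[OF v that], of b]]
    unfolding wronskian_def by (simp add: algebra_simps)
  moreover have "solves_separated_ode q (\<lambda>x. a * u x)" "solves_separated_ode q (\<lambda>x. b * v x)"
    using solves_separated_ode_lincomb[OF u u, of a 0] solves_separated_ode_lincomb[OF v v, of b 0]
    by simp_all
  ultimately show ?thesis
    using W assms(2,3) unfolding fundamental_pair_def by simp
qed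

lemma solves_separated_ode_compose_square:
  assumes f: "clifford_solution f" and c: "c \<noteq> 0"
  shows "solves_separated_ode (4 * c) (\<lambda>x. f (c * x^2))"
proof (rule solves_separated_odeI)
  fix x :: real assume "x > 0"
  with c have "c * x^2 \<noteq> 0" by simp
  with f have f1: "(f has_real_derivative deriv f (c * x^2)) (at (c * x^2))"
    and f2: "(deriv f has_real_derivative deriv (deriv f) (c * x^2)) (at (c * x^2))"
    and ode: "c * x^2 * deriv (deriv f) (c * x^2) = f (c * x^2)"
    unfolding clifford_solution_def by (auto simp: DERIV_deriv_iff_real_differentiable)
  show "((\<lambda>x. f (c * x^2)) has_real_derivative deriv f (c * x^2) * (2 * c * x)) (at x)"
    using has_real_derivative_compose_square[OF f1] .
  have "((\<lambda>x. 2 * c * x) has_real_derivative 2 * c) (at x)"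
    by (auto intro!: derivative_eq_intros)
  from DERIV_mult[OF has_real_derivative_compose_square[OF f2] this]
  show "((\<lambda>x. deriv f (c * x^2) * (2 * c * x)) has_real_derivative
          deriv (deriv f) (c * x^2) * (2 * c * x) * (2 * c * x) + 2 * c * deriv f (c * x^2)) (at x)" .
  have "deriv (deriv f) (c * x^2) * (2 * c * x) * (2 * c * x)
        = 4 * c * (c * x^2 * deriv (deriv f) (c * x^2))"
    by (simp add: algebra_simps power2_eq_square)
  then show "deriv (deriv f) (c * x^2) * (2 * c * x) * (2 * c * x) + 2 * c * deriv f (c * x^2)
             = deriv f (c * x^2) * (2 * c * x) / x + 4 * c * f (c * x^2)"
    using ode \<open>x > 0\<close> by simp
qed

lemma fundamental_pair_compose_square:
  assumes f: "clifford_solution f" and g: "clifford_solution g" and c: "c \<noteq> 0"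
    and W: "\<And>s. s \<noteq> 0 \<Longrightarrow> wronskian f g s \<noteq> 0"
  shows "fundamental_pair (4 * c) (\<lambda>x. f (c * x^2)) (\<lambda>x. g (c * x^2))"
proof -
  have "wronskian (\<lambda>x. f (c * x^2)) (\<lambda>x. g (c * x^2)) x = 2 * c * x * wronskian f g (c * x^2)"
    if "x > 0" for x
  proof -
    from that c have "c * x^2 \<noteq> 0" by simp
    with f g have "(f has_real_derivative deriv f (c * x^2)) (at (c * x^2))"
      "(g has_real_derivative deriv g (c * x^2)) (at (c * x^2))"
      unfolding clifford_solution_def by (auto simp: DERIV_deriv_iff_real_differentiable)
    then show ?thesis
      unfolding wronskian_def
      using DERIV_imp_deriv[OF has_real_derivative_compose_square] by (simp add: algebra_simps)
  qed
  with c W show ?thesis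
    unfolding fundamental_pair_def
    using solves_separated_ode_compose_square[OF f c] solves_separated_ode_compose_square[OF g c]
    by simp
qed

lemma fundamental_pair_clifford:
  assumes "c \<noteq> 0" "a \<noteq> 0" "b \<noteq> 0"
  shows "fundamental_pair (4 * c) (\<lambda>x. a * clifford1 (c * x^2)) (\<lambda>x. b * clifford2 (c * x^2))"
  using assms wronskian_clifford1_clifford2
  by (intro fundamental_pair_scale fundamental_pair_compose_square
      clifford_solution_clifford1 clifford_solution_clifford2) auto

section \<open>Bessel functions of order one\<close>

lemma besselI1_power_series: "besselI1 x = x / 2 * power_series bessel_coeff ((x / 2)^2)"
proof -
  have "besselI1 x = (\<Sum>k. x / 2 * (bessel_coeff k * ((x / 2)^2)^k))"
    unfolding besselI1_def
    by (rule arg_cong[where f=suminf], rule ext)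
       (simp add: bessel_coeff_def power_mult[symmetric] power_Suc)
  also have "\<dots> = x / 2 * power_series bessel_coeff ((x / 2)^2)"
    using entire_bessel_coeff unfolding power_series_def entire_coeffs_def by (intro suminf_mult) auto
  finally show ?thesis .
qed

lemma besselJ1_power_series: "besselJ1 x = x / 2 * power_series bessel_coeff (- ((x / 2)^2))"
proof -
  have "besselJ1 x = (\<Sum>k. x / 2 * (bessel_coeff k * (- ((x / 2)^2))^k))"
    unfolding besselJ1_def
    by (rule arg_cong[where f=suminf], rule ext)
       (simp add: bessel_coeff_def power_minus[of "(x/2)^2"] power_mult[symmetric] power_Suc mult_ac)
  also have "\<dots> = x / 2 * power_series bessel_coeff (- ((x / 2)^2))"
    using entire_bessel_coeff unfolding power_series_def entire_coeffs_def by (intro suminf_mult) auto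
  finally show ?thesis .
qed

lemma besselK1_power_series:
  "besselK1 x = 1 / x + ln (x / 2) * besselI1 x - x / 4 * power_series bessel2_coeff (x^2 / 4)"
  unfolding besselK1_def power_series_def bessel2_coeff_def by simp

lemma besselY1_power_series:
  "besselY1 x = - 2 / (pi * x) + 2 / pi * ln (x / 2) * besselJ1 x
     - x / (2 * pi) * power_series bessel2_coeff (- (x^2) / 4)"
  unfolding besselY1_def power_series_def bessel2_coeff_def by simp

lemma besselI1_clifford1:
  assumes "n > 0"
  shows "x * besselI1 (n * x) = 2 / n * clifford1 (n^2 / 4 * x^2)"
proof -
  have "(n * x / 2)^2 = n^2 / 4 * x^2" by (simp add: power_mult_distrib power_divide)
  then show ?thesis
    unfolding besselI1_power_series clifford1_def using assms by (simp add: field_simps power2_eq_square)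
qed

lemma besselJ1_clifford1:
  assumes "n > 0"
  shows "x * besselJ1 (n * x) = - 2 / n * clifford1 (- (n^2 / 4) * x^2)"
proof -
  have "- ((n * x / 2)^2) = - (n^2 / 4) * x^2" by (simp add: power_mult_distrib power_divide)
  then show ?thesis
    unfolding besselJ1_power_series clifford1_def using assms by (simp add: field_simps power2_eq_square)
qed

lemma besselK1_clifford2:
  assumes "n > 0" "x > 0"
  shows "x * besselK1 (n * x) = 1 / n * clifford2 (n^2 / 4 * x^2)"
proof -
  have s: "(n * x / 2)^2 = n^2 / 4 * x^2" "(n * x)^2 / 4 = n^2 / 4 * x^2"
    by (simp_all add: power_mult_distrib power_divide)
  have "\<bar>n^2 / 4 * x^2\<bar> = (n * x / 2)^2"
    using s by simp
  then have l: "ln \<bar>n^2 / 4 * x^2\<bar> = 2 * ln (n * x / 2)"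
    using assms by (simp add: ln_realpow)
  show ?thesis
    unfolding besselK1_power_series besselI1_power_series clifford2_def clifford1_def s l
    using assms by (simp add: field_simps power2_eq_square)
qed

lemma besselY1_clifford2:
  assumes "n > 0" "x > 0"
  shows "x * besselY1 (n * x) = - 2 / (pi * n) * clifford2 (- (n^2 / 4) * x^2)"
proof -
  have s: "- ((n * x / 2)^2) = - (n^2 / 4) * x^2" "- ((n * x)^2) / 4 = - (n^2 / 4) * x^2"
    by (simp_all add: power_mult_distrib power_divide)
  have "\<bar>- (n^2 / 4) * x^2\<bar> = (n * x / 2)^2"
    by (simp add: power_mult_distrib power_divide)
  then have l: "ln \<bar>- (n^2 / 4) * x^2\<bar> = 2 * ln (n * x / 2)"
    using assms by (simp add: ln_realpow)
  show ?thesis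
    unfolding besselY1_power_series besselJ1_power_series clifford2_def clifford1_def s l
    using assms by (simp add: field_simps power2_eq_square)
qed

lemma fundamental_pair_besselI1_besselK1:
  assumes "n > 0"
  shows "fundamental_pair (n^2) (\<lambda>x. x * besselI1 (n * x)) (\<lambda>x. x * besselK1 (n * x))"
  using fundamental_pair_cong[OF fundamental_pair_clifford[of "n^2 / 4" "2 / n" "1 / n"]]
    besselI1_clifford1[OF assms] besselK1_clifford2[OF assms] assms
  by simp

lemma fundamental_pair_besselJ1_besselY1:
  assumes "n > 0"
  shows "fundamental_pair (- (n^2)) (\<lambda>x. x * besselJ1 (n * x)) (\<lambda>x. x * besselY1 (n * x))"
  using fundamental_pair_cong[OF fundamental_pair_clifford[of "- (n^2 / 4)" "- 2 / n" "- 2 / (pi * n)"]]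
    besselJ1_clifford1[OF assms] besselY1_clifford2[OF assms] assms
  by simp

lemma separated_equation_iff_besselI1_besselK1:
  assumes "n > 0" "twice_diff_pos M" "\<forall>\<mu>>0. M \<mu> \<noteq> 0"
  shows "(\<forall>\<mu>>0. deriv (deriv M) \<mu> / M \<mu> - (1/\<mu>) * (deriv M \<mu> / M \<mu>) = n^2)
     \<longleftrightarrow> (\<exists>c1 c2. \<forall>\<mu>>0. M \<mu> = c1 * \<mu> * besselI1 (n*\<mu>) + c2 * \<mu> * besselK1 (n*\<mu>))"
  using assms solves_separated_ode_iff_quotient[of M "n^2"]
    solves_separated_ode_iff_span[OF fundamental_pair_besselI1_besselK1]
  by (simp add: mult.assoc)

lemma separated_equation_iff_besselJ1_besselY1:
  assumes "n > 0" "twice_diff_pos N" "\<forall>\<nu>>0. N \<nu> \<noteq> 0"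
  shows "(\<forall>\<nu>>0. - deriv (deriv N) \<nu> / N \<nu> + (1/\<nu>) * (deriv N \<nu> / N \<nu>) = n^2)
     \<longleftrightarrow> (\<exists>c3 c4. \<forall>\<nu>>0. N \<nu> = c3 * \<nu> * besselJ1 (n*\<nu>) + c4 * \<nu> * besselY1 (n*\<nu>))"
proof -
  have "(- a / b + c = n^2) \<longleftrightarrow> (a / b - c = - (n^2))" for a b c :: real
    by argo
  then show ?thesis
    using assms solves_separated_ode_iff_quotient[of N "- (n^2)"]
      solves_separated_ode_iff_span[OF fundamental_pair_besselJ1_besselY1]
    by (simp add: mult.assoc)
qed

section \<open>Separation of the Stokes operator\<close>

lemma has_real_derivative_inverse_radius:
  fixes x b :: real
  assumes "x^2 + b^2 \<noteq> 0"
  shows "((\<lambda>x. inverse (x^2 + b^2)) has_real_derivative - 2 * x * inverse (x^2 + b^2) ^ 2) (at x)"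
    and "((\<lambda>x. - 2 * x * inverse (x^2 + b^2) ^ 2) has_real_derivative
           - 2 * inverse (x^2 + b^2) ^ 2 + 8 * x^2 * inverse (x^2 + b^2) ^ 3) (at x)"
proof -
  have "((\<lambda>x. x^2 + b^2) has_real_derivative 2 * x) (at x)"
    by (auto intro!: derivative_eq_intros)
  from DERIV_inverse_fun[OF this assms]
  show d: "((\<lambda>x. inverse (x^2 + b^2)) has_real_derivative - 2 * x * inverse (x^2 + b^2) ^ 2) (at x)"
    by (simp add: power2_eq_square inverse_mult_distrib)
  have "((\<lambda>x. inverse (x^2 + b^2) ^ 2) has_real_derivative
          2 * inverse (x^2 + b^2) * (- 2 * x * inverse (x^2 + b^2) ^ 2)) (at x)"
    using DERIV_power[OF d, of 2] by (simp add: mult_ac)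
  from DERIV_mult[OF DERIV_cmult[OF DERIV_ident, of "- 2"] this]
  show "((\<lambda>x. - 2 * x * inverse (x^2 + b^2) ^ 2) has_real_derivative
           - 2 * inverse (x^2 + b^2) ^ 2 + 8 * x^2 * inverse (x^2 + b^2) ^ 3) (at x)"
    by (simp add: power2_eq_square power3_eq_cube algebra_simps)
qed

lemma cardioid_radial_operator:
  fixes A :: "real \<Rightarrow> real"
  assumes A: "twice_diff_pos A" and x: "x > 0"
  shows "deriv (deriv (\<lambda>x. C * A x / (x^2 + b^2))) x
           + (3 * x^2 - b^2) / (x * (x^2 + b^2)) * deriv (\<lambda>x. C * A x / (x^2 + b^2)) x
         = C * (deriv (deriv A) x - deriv A x / x) / (x^2 + b^2)"
proof -
  define g where "g x = inverse (x^2 + b^2)" for x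
  define g1 where "g1 x = - 2 * x * g x ^ 2" for x
  define g2 where "g2 x = - 2 * g x ^ 2 + 8 * x^2 * g x ^ 3" for x
  define F1 where "F1 x = C * (deriv A x * g x + A x * g1 x)" for x
  define F2 where "F2 x = C * (deriv (deriv A) x * g x + 2 * deriv A x * g1 x + A x * g2 x)" for x
  have pos: "x^2 + b^2 > 0" if "x > 0" for x
    using that by (simp add: add_pos_nonneg)
  have dg: "(g has_real_derivative g1 x) (at x)" and dg1: "(g1 has_real_derivative g2 x) (at x)"
    if "x > 0" for x
  proof -
    from that have "x^2 + b^2 \<noteq> 0"
      using pos by force
    from has_real_derivative_inverse_radius[OF this]
    show "(g has_real_derivative g1 x) (at x)" "(g1 has_real_derivative g2 x) (at x)"
      unfolding g_def[abs_def] g1_def[abs_def] g2_def .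
  qed
  have F: "(\<lambda>x. C * A x / (x^2 + b^2)) = (\<lambda>x. C * (A x * g x))"
    by (simp add: g_def field_simps)
  have dF: "((\<lambda>x. C * A x / (x^2 + b^2)) has_real_derivative F1 x) (at x)" if "x > 0" for x
    unfolding F F1_def using twice_diff_pos_DERIV[OF A that] dg[OF that]
    by (auto intro!: derivative_eq_intros)
  have dF1: "(F1 has_real_derivative F2 x) (at x)"
    unfolding F1_def[abs_def] F2_def using twice_diff_pos_DERIV[OF A x] dg[OF x] dg1[OF x]
    by (auto intro!: derivative_eq_intros simp: algebra_simps)
  have "deriv (\<lambda>x. C * A x / (x^2 + b^2)) y = F1 y" if "y \<in> {0<..}" for y
    using DERIV_imp_deriv[OF dF] that by simp
  then have "deriv (deriv (\<lambda>x. C * A x / (x^2 + b^2))) x = deriv F1 x"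
    using x by (intro deriv_cong_open[of "{0<..}"]) auto
  also have "\<dots> = F2 x"
    using DERIV_imp_deriv[OF dF1] .
  finally have "deriv (deriv (\<lambda>x. C * A x / (x^2 + b^2))) x = F2 x" .
  moreover have "deriv (\<lambda>x. C * A x / (x^2 + b^2)) x = F1 x"
    using DERIV_imp_deriv[OF dF[OF x]] .
  moreover have "F2 x + (3 * x^2 - b^2) / (x * (x^2 + b^2)) * F1 x
                 = C * (deriv (deriv A) x - deriv A x / x) / (x^2 + b^2)"
  proof -
    define R where "R = x^2 + b^2"
    have R: "R \<noteq> 0" and b2: "b^2 = R - x^2" and gR: "g x = inverse R"
      using pos[OF x] unfolding R_def g_def by auto
    show ?thesis
      unfolding F1_def F2_def g1_def g2_def gR b2 R_def[symmetric]
      using R x by (simp add: field_simps power2_eq_square power3_eq_cube)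
  qed
  ultimately show ?thesis by simp
qed

lemma stokesE2_cardioid_product:
  assumes M: "twice_diff_pos M" and N: "twice_diff_pos N" and k: "k \<noteq> 0"
    and \<mu>: "\<mu> > 0" and \<nu>: "\<nu> > 0"
  shows "stokesE2_cardioid (\<lambda>m v. M m * N v / (k * (m^2 + v^2))) \<mu> \<nu>
         = (\<mu>^2 + \<nu>^2)^2 / k * (N \<nu> * (deriv (deriv M) \<mu> - deriv M \<mu> / \<mu>)
                                + M \<mu> * (deriv (deriv N) \<nu> - deriv N \<nu> / \<nu>))"
proof -
  define R where "R = \<mu>^2 + \<nu>^2"
  have R: "R \<noteq> 0"
    using \<mu> unfolding R_def by (simp add: add_pos_nonneg)
  define Fm where "Fm = (\<lambda>m. M m * N \<nu> / (k * (m^2 + \<nu>^2)))"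
  define Fv where "Fv = (\<lambda>v. M \<mu> * N v / (k * (\<mu>^2 + v^2)))"
  have "Fm = (\<lambda>m. N \<nu> / k * M m / (m^2 + \<nu>^2))"
    "Fv = (\<lambda>v. M \<mu> / k * N v / (v^2 + \<mu>^2))"
    unfolding Fm_def Fv_def by (simp_all add: divide_inverse inverse_mult_distrib mult_ac add.commute)
  then have m: "deriv (deriv Fm) \<mu> + (3 * \<mu>^2 - \<nu>^2) / (\<mu> * R) * deriv Fm \<mu>
                = N \<nu> / k * (deriv (deriv M) \<mu> - deriv M \<mu> / \<mu>) / R"
    and v: "deriv (deriv Fv) \<nu> + (3 * \<nu>^2 - \<mu>^2) / (\<nu> * R) * deriv Fv \<nu>
                = M \<mu> / k * (deriv (deriv N) \<nu> - deriv N \<nu> / \<nu>) / R"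
    using cardioid_radial_operator[OF M \<mu>, of "N \<nu> / k" \<nu>]
      cardioid_radial_operator[OF N \<nu>, of "M \<mu> / k" \<mu>]
    unfolding R_def by (simp_all add: add.commute)
  have "stokesE2_cardioid (\<lambda>m v. M m * N v / (k * (m^2 + v^2))) \<mu> \<nu>
        = R^3 * ((deriv (deriv Fm) \<mu> + (3 * \<mu>^2 - \<nu>^2) / (\<mu> * R) * deriv Fm \<mu>)
                 + (deriv (deriv Fv) \<nu> + (3 * \<nu>^2 - \<mu>^2) / (\<nu> * R) * deriv Fv \<nu>))"
    unfolding stokesE2_cardioid_def Fm_def Fv_def R_def by (simp add: algebra_simps)
  also have "\<dots> = R^2 / k * (N \<nu> * (deriv (deriv M) \<mu> - deriv M \<mu> / \<mu>)
                             + M \<mu> * (deriv (deriv N) \<nu> - deriv N \<nu> / \<nu>))"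
    unfolding m v using R k by (simp add: field_simps power2_eq_square power3_eq_cube)
  finally show ?thesis
    unfolding R_def .
qed

lemma separation_constant:
  fixes f g :: "real \<Rightarrow> real"
  shows "(\<forall>x>0. \<forall>y>0. f x = g y) \<longleftrightarrow> (\<exists>c. (\<forall>x>0. f x = c) \<and> (\<forall>y>0. g y = c))"
proof
  assume "\<forall>x>0. \<forall>y>0. f x = g y"
  then show "\<exists>c. (\<forall>x>0. f x = c) \<and> (\<forall>y>0. g y = c)"
    by (intro exI[of _ "g 1"]) (metis zero_less_one)
qed auto

lemma stokesE2_cardioid_separation:
  assumes M: "twice_diff_pos M" and N: "twice_diff_pos N"
    and M0: "\<forall>\<mu>>0. M \<mu> \<noteq> 0" and N0: "\<forall>\<nu>>0. N \<nu> \<noteq> 0" and k: "k \<noteq> 0"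
  shows "(\<forall>\<mu>>0. \<forall>\<nu>>0. stokesE2_cardioid (\<lambda>m v. M m * N v / (k * (m^2 + v^2))) \<mu> \<nu> = 0)
     \<longleftrightarrow> (\<exists>lam. (\<forall>\<mu>>0. deriv (deriv M) \<mu> / M \<mu> - (1/\<mu>) * (deriv M \<mu> / M \<mu>) = lam) \<and>
                 (\<forall>\<nu>>0. - deriv (deriv N) \<nu> / N \<nu> + (1/\<nu>) * (deriv N \<nu> / N \<nu>) = lam))"
proof -
  have "stokesE2_cardioid (\<lambda>m v. M m * N v / (k * (m^2 + v^2))) \<mu> \<nu> = 0
        \<longleftrightarrow> deriv (deriv M) \<mu> / M \<mu> - (1/\<mu>) * (deriv M \<mu> / M \<mu>)
            = - deriv (deriv N) \<nu> / N \<nu> + (1/\<nu>) * (deriv N \<nu> / N \<nu>)"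
    if \<mu>: "\<mu> > 0" and \<nu>: "\<nu> > 0" for \<mu> \<nu>
  proof -
    have "M \<mu> \<noteq> 0" "N \<nu> \<noteq> 0" "(\<mu>^2 + \<nu>^2)^2 / k \<noteq> 0"
      using M0 N0 \<mu> \<nu> k by (auto simp: add_pos_nonneg)
    moreover have "N \<nu> * (deriv (deriv M) \<mu> - deriv M \<mu> / \<mu>) + M \<mu> * (deriv (deriv N) \<nu> - deriv N \<nu> / \<nu>)
      = M \<mu> * N \<nu> * ((deriv (deriv M) \<mu> / M \<mu> - (1/\<mu>) * (deriv M \<mu> / M \<mu>))
                     - (- deriv (deriv N) \<nu> / N \<nu> + (1/\<nu>) * (deriv N \<nu> / N \<nu>)))"
      using calculation \<mu> \<nu> by (simp add: field_simps)
    ultimately show ?thesis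
      unfolding stokesE2_cardioid_product[OF M N k \<mu> \<nu>] using \<mu> by simp
  qed
  then show ?thesis
    by (simp add: separation_constant[symmetric])
qed

lemma stokesE2_cardioid_solutions:
  assumes "solves_separated_ode q M" "solves_separated_ode (- q) N" "\<mu> > 0" "\<nu> > 0"
  shows "stokesE2_cardioid (\<lambda>m v. M m * N v / (m^2 + v^2)) \<mu> \<nu> = 0"
  using stokesE2_cardioid_product[of M N 1 \<mu> \<nu>] assms
  unfolding solves_separated_ode_def by (simp add: algebra_simps)

lemma stokesE2_cardioid_bessel_product:
  assumes n: "n > 0" and "\<mu> > 0" "\<nu> > 0"
  shows "stokesE2_cardioid
           (\<lambda>m v. (c1 * m * besselI1 (n * m) + c2 * m * besselK1 (n * m))
                  * (c3 * v * besselJ1 (n * v) + c4 * v * besselY1 (n * v)) / (m^2 + v^2)) \<mu> \<nu> = 0"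
proof (rule stokesE2_cardioid_solutions[where q="n^2"])
  show "solves_separated_ode (n^2) (\<lambda>m. c1 * m * besselI1 (n * m) + c2 * m * besselK1 (n * m))"
    unfolding solves_separated_ode_iff_span[OF fundamental_pair_besselI1_besselK1[OF n]]
    by (auto simp: mult.assoc)
  show "solves_separated_ode (- (n^2)) (\<lambda>v. c3 * v * besselJ1 (n * v) + c4 * v * besselY1 (n * v))"
    unfolding solves_separated_ode_iff_span[OF fundamental_pair_besselJ1_besselY1[OF n]]
    by (auto simp: mult.assoc)
qed (use assms in auto)

theorem mainTheorem3:
  shows
   "(\<forall>M N :: real \<Rightarrow> real.
       twice_diff_pos M \<and> twice_diff_pos N \<and>
       (\<forall>\<mu>>0. M \<mu> \<noteq> 0) \<and> (\<forall>\<nu>>0. N \<nu> \<noteq> 0) \<longrightarrow>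
       ((\<forall>\<mu>>0. \<forall>\<nu>>0. stokesE2_cardioid
            (\<lambda>m v. M m * N v / (sqrt 2 * (m^2 + v^2))) \<mu> \<nu> = 0)
        \<longleftrightarrow>
        (\<exists>lam::real.
           (\<forall>\<mu>>0. deriv (deriv M) \<mu> / M \<mu> - (1/\<mu>) * (deriv M \<mu> / M \<mu>) = lam) \<and>
           (\<forall>\<nu>>0. - deriv (deriv N) \<nu> / N \<nu> + (1/\<nu>) * (deriv N \<nu> / N \<nu>) = lam))))
    \<and>
    (\<forall>n::real. n > 0 \<longrightarrow>
       (\<forall>M :: real \<Rightarrow> real. twice_diff_pos M \<and> (\<forall>\<mu>>0. M \<mu> \<noteq> 0) \<longrightarrow>
          ((\<forall>\<mu>>0. deriv (deriv M) \<mu> / M \<mu> - (1/\<mu>) * (deriv M \<mu> / M \<mu>) = n^2)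
           \<longleftrightarrow> (\<exists>c1 c2. \<forall>\<mu>>0. M \<mu> = c1 * \<mu> * besselI1 (n*\<mu>) + c2 * \<mu> * besselK1 (n*\<mu>))))
     \<and>
       (\<forall>N :: real \<Rightarrow> real. twice_diff_pos N \<and> (\<forall>\<nu>>0. N \<nu> \<noteq> 0) \<longrightarrow>
          ((\<forall>\<nu>>0. - deriv (deriv N) \<nu> / N \<nu> + (1/\<nu>) * (deriv N \<nu> / N \<nu>) = n^2)
           \<longleftrightarrow> (\<exists>c3 c4. \<forall>\<nu>>0. N \<nu> = c3 * \<nu> * besselJ1 (n*\<nu>) + c4 * \<nu> * besselY1 (n*\<nu>)))))
    \<and>
    (\<forall>(n::real) c1 c2 c3 c4. n > 0 \<longrightarrow>
       (\<forall>\<mu>>0. \<forall>\<nu>>0. stokesE2_cardioid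
          (\<lambda>m v. (c1 * m * besselI1 (n * m) + c2 * m * besselK1 (n * m))
                 * (c3 * v * besselJ1 (n * v) + c4 * v * besselY1 (n * v)) / (m^2 + v^2)) \<mu> \<nu> = 0))"
  by (intro conjI allI impI stokesE2_cardioid_separation stokesE2_cardioid_bessel_product
      separated_equation_iff_besselI1_besselK1 separated_equation_iff_besselJ1_besselY1) auto

end
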